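(* Call an edge $(u,v)$ of $G(n,r)$ long if $|uv|\ge\sqrt{\frac{8\ln n}{n}}$. Then w.h.p. none of the long edges of $G(n,r)$ is free (i.e. every long edge is crossed by some other edge of $G(n,r)$).
   Context: Here the $n$ points of $G(n,r)$ are chosen independently and uniformly at random on the unit torus (the unit square with wraparound); two points are joined by a straight-line edge iff their distance is at most $r=r(n)$. An edge of a geometric graph is free if its interior is not intersected by any other edge of the graph. "W.h.p." means with probability tending to $1$ as $n\to\infty$. *)

theory Defs
  imports "HOL-Probability.Probability"
begin

text \<open>The unit torus is represented by the unit square in real \<times> real; coordinates
  are taken modulo 1. \<close>

text \<open>Signed shortest displacement modulo 1 (a value in [-1/2, 1/2]).\<close>
definition tdisp :: "real \<Rightarrow> real" where
  "tdisp t = t - of_int (round t)"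

definition tvec :: "real \<times> real \<Rightarrow> real \<times> real \<Rightarrow> real \<times> real" where
  "tvec p q = (tdisp (fst q - fst p), tdisp (snd q - snd p))"

definition tdist :: "real \<times> real \<Rightarrow> real \<times> real \<Rightarrow> real" where
  "tdist p q = norm (tvec p q)"

text \<open>All lifts to the plane of the straight-line segment from p to q on the torus,
  with parameter s ranging over S (S = {0<..<1}: interior, S = {0..1}: closed edge).\<close>
definition edge_lift :: "real \<times> real \<Rightarrow> real \<times> real \<Rightarrow> real set \<Rightarrow> (real \<times> real) set" where
  "edge_lift p q S =
     {p + s *\<^sub>R tvec p q + (of_int a, of_int b) | s a b. s \<in> S}"

definition rgg_edge :: "(nat \<Rightarrow> real \<times> real) \<Rightarrow> real \<Rightarrow> nat \<Rightarrow> nat \<Rightarrow> bool" where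
  "rgg_edge x r i j \<longleftrightarrow> i \<noteq> j \<and> tdist (x i) (x j) \<le> r"

definition free_edge :: "nat \<Rightarrow> (nat \<Rightarrow> real \<times> real) \<Rightarrow> real \<Rightarrow> nat \<Rightarrow> nat \<Rightarrow> bool" where
  "free_edge n x r i j \<longleftrightarrow>
     \<not> (\<exists>k l. k < n \<and> l < n \<and> rgg_edge x r k l \<and> {k, l} \<noteq> {i, j} \<and>
            edge_lift (x i) (x j) {0<..<1} \<inter> edge_lift (x k) (x l) {0..1} \<noteq> {})"

definition torus_unif :: "(real \<times> real) measure" where
  "torus_unif = uniform_measure lborel ({0..1} \<times> {0..1})"

definition rgg_space :: "nat \<Rightarrow> (nat \<Rightarrow> real \<times> real) measure" where
  "rgg_space n = PiM {..<n} (\<lambda>_. torus_unif)"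

definition whp :: "(nat \<Rightarrow> (nat \<Rightarrow> real \<times> real) \<Rightarrow> bool) \<Rightarrow> bool" where
  "whp P \<longleftrightarrow> (\<exists>A. (\<forall>n. A n \<in> sets (rgg_space n) \<and>
                      A n \<subseteq> {x \<in> space (rgg_space n). P n x}) \<and>
                 (\<lambda>n. measure (rgg_space n) (A n)) \<longlonglongrightarrow> 1)"

end

theory Submission
  imports Defs "HOL-Real_Asymp.Real_Asymp"
begin

text \<open>Let \<open>uv\<close> be an edge of length at least \<open>d = sqrt (8 ln n / n)\<close>. The line \<open>uv\<close> cuts the
  open disc of diameter \<open>d\<close> around the midpoint of \<open>uv\<close> into two halves of area
  \<open>pi d\<^sup>2 / 8 = pi ln n / n\<close>. If both halves contain sample points \<open>w\<close> and \<open>w'\<close>, then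
  \<open>|w w'| < d \<le> |u v| \<le> r\<close>, so \<open>w w'\<close> is an edge, and the segment \<open>w w'\<close> meets the line
  inside the disc, that is, in the interior of \<open>uv\<close>; if \<open>w = w'\<close>, then \<open>w\<close> lies on \<open>uv\<close>
  and the edge \<open>w u\<close> crosses \<open>uv\<close>. A fixed half misses the other \<open>n - 2\<close> points with
  probability at most \<open>(1 - pi ln n / n) ^ (n - 2) \<le> n ^ (- pi + o(1))\<close>, and a union bound
  over the at most \<open>2 n\<^sup>2\<close> choices of \<open>(u, v, half)\<close> finishes the proof.\<close>

section \<open>Measurability and the uniform distribution on the torus\<close>

lemma borel_measurable_fst [measurable]:
  "(fst :: 'a::topological_space \<times> 'b::topological_space \<Rightarrow> 'a) \<in> borel_measurable borel"
  by (intro borel_measurable_continuous_onI continuous_intros)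

lemma borel_measurable_snd [measurable]:
  "(snd :: 'a::topological_space \<times> 'b::topological_space \<Rightarrow> 'b) \<in> borel_measurable borel"
  by (intro borel_measurable_continuous_onI continuous_intros)

lemma borel_measurable_tdisp [measurable]: "tdisp \<in> borel_measurable borel"
proof -
  have "tdisp = (\<lambda>t. t - of_int \<lfloor>t + 1/2\<rfloor>)"
    by (auto simp: tdisp_def round_def fun_eq_iff)
  then show ?thesis
    unfolding \<open>tdisp = _\<close> by measurable
qed

lemma sets_torus_unif [simp, measurable_cong]: "sets torus_unif = sets borel"
  by (simp add: torus_unif_def)

lemma space_torus_unif [simp]: "space torus_unif = UNIV"
  by (simp add: torus_unif_def)

lemma borel_measurable_tdist [measurable]:
  "(\<lambda>z. tdist (fst z) (snd z)) \<in> borel_measurable borel"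
  unfolding tdist_def tvec_def by measurable

lemma sets_pair_torus_unif: "sets (torus_unif \<Otimes>\<^sub>M torus_unif) = sets borel"
  by (simp only: sets_pair_measure_cong[OF sets_torus_unif sets_torus_unif] borel_prod)

lemma emeasure_unit_square: "emeasure lborel ({0..1::real} \<times> {0..1::real}) = 1"
proof -
  have "{0..1::real} \<times> {0..1::real} = cbox (0, 0) (1, 1)"
    by (simp add: cbox_Pair_eq)
  then show ?thesis
    by (simp add: emeasure_lborel_cbox_eq Basis_prod_def inner_prod_def)
qed

lemma unit_square_borel: "({0..1} \<times> {0..1} :: (real \<times> real) set) \<in> sets borel"
  by (intro borel_closed closed_Times) auto

lemma prob_space_torus_unif: "prob_space torus_unif"
  unfolding torus_unif_def
  by (rule prob_space_uniform_measure) (simp_all add: emeasure_unit_square)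

lemma emeasure_torus_unif:
  "A \<in> sets borel \<Longrightarrow> emeasure torus_unif A = emeasure lborel (({0..1} \<times> {0..1}) \<inter> A)"
  unfolding torus_unif_def
  by (subst emeasure_uniform_measure)
     (auto simp: emeasure_unit_square divide_ennreal_def unit_square_borel)

lemma prob_space_rgg_space: "prob_space (rgg_space n)"
  unfolding rgg_space_def by (intro prob_space_PiM) (simp add: prob_space_torus_unif)

section \<open>Avoidance probabilities of independent samples\<close>

lemma sets_PiM_avoid:
  fixes i j n :: nat
  assumes ij: "i < n" "j < n"
    and C_meas: "Measurable.pred (M \<Otimes>\<^sub>M M) (\<lambda>(u, v). C u v)"
    and T_meas: "Measurable.pred (M \<Otimes>\<^sub>M M \<Otimes>\<^sub>M M) (\<lambda>(u, v, w). w \<in> T u v)"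
  shows "{x \<in> space (\<Pi>\<^sub>M k\<in>{..<n}. M). C (x i) (x j) \<and> (\<forall>k\<in>{..<n} - {i, j}. x k \<notin> T (x i) (x j))}
    \<in> sets (\<Pi>\<^sub>M k\<in>{..<n}. M)"
proof -
  have "(\<lambda>x. (x i, x j)) \<in> (\<Pi>\<^sub>M k\<in>{..<n}. M) \<rightarrow>\<^sub>M M \<Otimes>\<^sub>M M"
    using ij by (intro measurable_Pair measurable_component_singleton) auto
  from measurable_compose[OF this C_meas]
  have C_pred: "Measurable.pred (\<Pi>\<^sub>M k\<in>{..<n}. M) (\<lambda>x. C (x i) (x j))"
    by simp
  have T_pred: "Measurable.pred (\<Pi>\<^sub>M k\<in>{..<n}. M) (\<lambda>x. x k \<notin> T (x i) (x j))"
    if "k \<in> {..<n} - {i, j}" for k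
  proof -
    have "(\<lambda>x. (x i, x j, x k)) \<in> (\<Pi>\<^sub>M k\<in>{..<n}. M) \<rightarrow>\<^sub>M M \<Otimes>\<^sub>M M \<Otimes>\<^sub>M M"
      using ij that by (intro measurable_Pair measurable_component_singleton) auto
    from measurable_compose[OF this T_meas] show ?thesis
      by simp
  qed
  have "Measurable.pred (\<Pi>\<^sub>M k\<in>{..<n}. M) (\<lambda>x. \<forall>k\<in>{..<n} - {i, j}. x k \<notin> T (x i) (x j))"
    by (rule pred_intros_finite(3)) (simp_all add: T_pred)
  with C_pred have "Measurable.pred (\<Pi>\<^sub>M k\<in>{..<n}. M)
      (\<lambda>x. C (x i) (x j) \<and> (\<forall>k\<in>{..<n} - {i, j}. x k \<notin> T (x i) (x j)))"
    by (rule pred_intros_logic(3))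
  then show ?thesis
    by (simp add: Measurable.pred_def)
qed

lemma (in prob_space) emeasure_compl_le:
  assumes "{w \<in> space M. w \<in> A} \<in> events" "\<alpha> \<le> prob A"
  shows "emeasure M (space M - A) \<le> ennreal (1 - \<alpha>)"
proof -
  let ?A = "{w \<in> space M. w \<in> A}"
  have "prob A \<le> prob ?A"
  proof (cases "A \<in> events")
    case True
    then have "?A = A"
      using sets.sets_into_space by blast
    then show ?thesis
      by simp
  qed (simp add: measure_notin_sets)
  have "space M - A = space M - ?A"
    by blast
  then have "prob (space M - A) = 1 - prob ?A"
    using prob_compl[OF assms(1)] by simp
  with \<open>prob A \<le> prob ?A\<close> assms(2) show ?thesis
    by (simp add: emeasure_eq_measure ennreal_leI)
qed

lemma (in prob_space) emeasure_PiM_le_sections: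
  assumes "I \<inter> J = {}" "finite I" "finite J" "B \<in> sets (\<Pi>\<^sub>M k\<in>I \<union> J. M)"
    and "\<And>x. x \<in> space (\<Pi>\<^sub>M k\<in>I. M) \<Longrightarrow>
      emeasure (\<Pi>\<^sub>M k\<in>J. M) ((\<lambda>y. merge I J (x, y)) -` B \<inter> space (\<Pi>\<^sub>M k\<in>J. M)) \<le> c"
  shows "emeasure (\<Pi>\<^sub>M k\<in>I \<union> J. M) B \<le> c"
proof -
  interpret product_sigma_finite "\<lambda>_. M"
    by (simp add: product_sigma_finite_def prob_space_imp_sigma_finite prob_space_axioms)
  interpret PiM: prob_space "\<Pi>\<^sub>M k\<in>I. M"
    by (intro prob_space_PiM) (simp add: prob_space_axioms)
  have "emeasure (\<Pi>\<^sub>M k\<in>I \<union> J. M) B = (\<integral>\<^sup>+x. emeasure (\<Pi>\<^sub>M k\<in>J. M)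
      ((\<lambda>y. merge I J (x, y)) -` B \<inter> space (\<Pi>\<^sub>M k\<in>J. M)) \<partial>(\<Pi>\<^sub>M k\<in>I. M))"
    using assms(1-4) by (rule emeasure_fold_integral)
  also have "\<dots> \<le> (\<integral>\<^sup>+x. c \<partial>(\<Pi>\<^sub>M k\<in>I. M))"
    using assms(5) by (rule nn_integral_mono)
  also have "\<dots> = c"
    by (simp add: PiM.emeasure_space_1)
  finally show ?thesis .
qed

lemma (in prob_space) measure_PiM_avoid_le:
  fixes C :: "'a \<Rightarrow> 'a \<Rightarrow> bool" and T :: "'a \<Rightarrow> 'a \<Rightarrow> 'a set"
  assumes ij: "i < n" "j < n" "i \<noteq> j"
    and C_meas: "Measurable.pred (M \<Otimes>\<^sub>M M) (\<lambda>(u, v). C u v)"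
    and T_meas: "Measurable.pred (M \<Otimes>\<^sub>M M \<Otimes>\<^sub>M M) (\<lambda>(u, v, w). w \<in> T u v)"
    and T_prob: "\<And>u v. u \<in> space M \<Longrightarrow> v \<in> space M \<Longrightarrow> C u v \<Longrightarrow> \<alpha> \<le> prob (T u v)"
    and "\<alpha> \<le> 1"
  shows "measure (\<Pi>\<^sub>M k\<in>{..<n}. M)
      {x \<in> space (\<Pi>\<^sub>M k\<in>{..<n}. M). C (x i) (x j) \<and> (\<forall>k\<in>{..<n} - {i, j}. x k \<notin> T (x i) (x j))}
    \<le> (1 - \<alpha>) ^ (n - 2)"
proof -
  interpret product_sigma_finite "\<lambda>_. M"
    by (simp add: product_sigma_finite_def prob_space_imp_sigma_finite prob_space_axioms)
  interpret PiM: prob_space "\<Pi>\<^sub>M k\<in>{..<n}. M"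
    by (intro prob_space_PiM) (simp add: prob_space_axioms)
  define J where "J = {..<n} - {i, j}"
  define B where "B = {x \<in> space (\<Pi>\<^sub>M k\<in>{..<n}. M). C (x i) (x j) \<and> (\<forall>k\<in>J. x k \<notin> T (x i) (x j))}"
  have IJ: "{i, j} \<union> J = {..<n}" "{i, j} \<inter> J = {}" "finite J" "card J = n - 2"
    using ij by (auto simp: J_def card_Diff_subset)
  have hit_sets: "{w \<in> space M. w \<in> T u v} \<in> events" if "u \<in> space M" "v \<in> space M" for u v
  proof -
    have "(\<lambda>w. (u, v, w)) \<in> M \<rightarrow>\<^sub>M M \<Otimes>\<^sub>M M \<Otimes>\<^sub>M M"
      using that by measurable
    from measurable_compose[OF this T_meas] show ?thesis
      by (simp add: Measurable.pred_def)
  qed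
  \<comment> \<open>Given the samples \<open>i\<close> and \<open>j\<close>, the other \<open>n - 2\<close> samples miss \<open>T\<close> independently.\<close>
  have "emeasure (\<Pi>\<^sub>M k\<in>{i, j} \<union> J. M) B \<le> ennreal (1 - \<alpha>) ^ (n - 2)"
  proof (rule emeasure_PiM_le_sections)
    show "B \<in> sets (\<Pi>\<^sub>M k\<in>{i, j} \<union> J. M)"
      unfolding IJ(1) unfolding B_def J_def by (rule sets_PiM_avoid[OF ij(1,2) C_meas T_meas])
    fix x
    assume x: "x \<in> space (\<Pi>\<^sub>M k\<in>{i, j}. M)"
    let ?S = "(\<lambda>y. merge {i, j} J (x, y)) -` B \<inter> space (\<Pi>\<^sub>M k\<in>J. M)"
    show "emeasure (\<Pi>\<^sub>M k\<in>J. M) ?S \<le> ennreal (1 - \<alpha>) ^ (n - 2)"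
    proof (cases "C (x i) (x j)")
      case True
      have xij: "x i \<in> space M" "x j \<in> space M"
        using x by (auto simp: space_PiM)
      have "?S \<subseteq> (\<Pi>\<^sub>E k\<in>J. space M - T (x i) (x j))"
        using IJ(2) by (auto simp: B_def merge_def space_PiM PiE_def Pi_def extensional_def split: if_splits)
      then have "emeasure (\<Pi>\<^sub>M k\<in>J. M) ?S \<le> emeasure (\<Pi>\<^sub>M k\<in>J. M) (\<Pi>\<^sub>E k\<in>J. space M - T (x i) (x j))"
        using hit_sets[OF xij] IJ(3) by (intro emeasure_mono sets_PiM_I_finite) (auto simp: set_diff_eq)
      also have "\<dots> = (\<Prod>k\<in>J. emeasure M (space M - T (x i) (x j)))"
        using hit_sets[OF xij] IJ(3) by (intro emeasure_PiM) (auto simp: set_diff_eq)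
      also have "\<dots> \<le> ennreal (1 - \<alpha>) ^ (n - 2)"
        using emeasure_compl_le[OF hit_sets[OF xij] T_prob[OF xij True]] IJ(4)
        by (simp add: prod_constant power_mono)
      finally show ?thesis .
    next
      case False
      then have "?S = {}"
        using IJ(2) by (auto simp: B_def merge_def)
      then show ?thesis
        by simp
    qed
  qed (use IJ in auto)
  then have "emeasure (\<Pi>\<^sub>M k\<in>{..<n}. M) B \<le> ennreal ((1 - \<alpha>) ^ (n - 2))"
    using \<open>\<alpha> \<le> 1\<close> by (simp only: IJ(1) ennreal_power diff_ge_0_iff_ge)
  with \<open>\<alpha> \<le> 1\<close> show ?thesis
    by (simp add: PiM.emeasure_eq_measure B_def J_def ennreal_le_iff)
qed

section \<open>Half discs\<close>

definition cross2 :: "real \<times> real \<Rightarrow> real \<times> real \<Rightarrow> real" where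
  "cross2 a b = fst a * snd b - snd a * fst b"

lemma cross2_minus_left [simp]: "cross2 (- e) z = - cross2 e z"
  by (simp add: cross2_def)

lemma cross2_minus_right [simp]: "cross2 e (- z) = - cross2 e z"
  by (simp add: cross2_def)

lemma cross2_scaleR_add_right:
  "cross2 e (a *\<^sub>R z + b *\<^sub>R z') = a * cross2 e z + b * cross2 e z'"
  by (simp add: cross2_def algebra_simps)

lemma cross2_eq_0_imp_parallel:
  assumes "cross2 e z = 0" "e \<noteq> 0"
  obtains c where "z = c *\<^sub>R e"
proof -
  obtain e1 e2 z1 z2 where e: "e = (e1, e2)" and z: "z = (z1, z2)"
    by (cases e, cases z)
  have "e1 * z2 = e2 * z1"
    using assms(1) by (simp add: cross2_def e z)
  moreover have "e1 * e1 + e2 * e2 \<noteq> 0"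
    using assms(2) by (auto simp: e zero_prod_def add_nonneg_eq_0_iff)
  ultimately have "z = ((e1 * z1 + e2 * z2) / (e1 * e1 + e2 * e2)) *\<^sub>R e"
    by (simp add: e z field_simps)
  then show ?thesis
    by (rule that)
qed

definition half_disc :: "real \<times> real \<Rightarrow> real \<times> real \<Rightarrow> real \<Rightarrow> (real \<times> real) set" where
  "half_disc c e R = {w. dist w c < R \<and> 0 \<le> cross2 e (w - c)}"

lemma half_disc_borel [measurable]: "half_disc c e R \<in> sets borel"
  unfolding half_disc_def cross2_def by measurable

lemma emeasure_half_disc_ge:
  assumes "0 \<le> R"
  shows "ennreal (pi * R\<^sup>2 / 2) \<le> emeasure lborel (half_disc c e R)"
proof -
  \<comment> \<open>The point reflection in \<open>c\<close> exchanges the two halves, which together cover the disc.\<close>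
  define f where "f w = (-1) *\<^sub>R w + 2 *\<^sub>R c" for w :: "real \<times> real"
  have "f ` half_disc c e R = half_disc c (- e) R"
  proof -
    have f_involutive: "f (f w) = w" for w
      by (simp add: f_def algebra_simps)
    have reflect: "f w - c = - (w - c)" for w
      by (simp add: f_def scaleR_2 algebra_simps)
    have mirror: "f w \<in> half_disc c (- e) R \<longleftrightarrow> w \<in> half_disc c e R" for w
      unfolding half_disc_def mem_Collect_eq dist_norm reflect norm_minus_cancel
        cross2_minus_left cross2_minus_right by simp
    show ?thesis
    proof (intro set_eqI iffI)
      fix w
      assume "w \<in> f ` half_disc c e R"
      then show "w \<in> half_disc c (- e) R"
        using mirror by blast
    next
      fix w
      assume "w \<in> half_disc c (- e) R"
      then have "f w \<in> half_disc c e R"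
        using mirror[of "f w"] by (simp add: f_involutive)
      then show "w \<in> f ` half_disc c e R"
        using f_involutive by (metis image_eqI)
    qed
  qed
  then have same: "emeasure lborel (half_disc c (- e) R) = emeasure lborel (half_disc c e R)"
    using emeasure_lebesgue_affine[of "-1" "2 *\<^sub>R c" "half_disc c e R"] by (simp add: f_def)
  have "ennreal (pi * R\<^sup>2) = emeasure lborel (ball c R)"
    using assms by (simp add: emeasure_ball unit_ball_vol_2 power2_eq_square mult.commute)
  also have "\<dots> \<le> emeasure lborel (half_disc c e R \<union> half_disc c (- e) R)"
    by (rule emeasure_mono) (force simp: half_disc_def dist_commute, simp)
  also have "\<dots> \<le> emeasure lborel (half_disc c e R) + emeasure lborel (half_disc c (- e) R)"
    by (rule emeasure_subadditive) simp_all
  finally have "ennreal (pi * R\<^sup>2) \<le> 2 * emeasure lborel (half_disc c e R)"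
    by (simp add: same mult_2)
  then show ?thesis
  proof (cases "emeasure lborel (half_disc c e R)" rule: ennreal_cases)
    case (real x)
    with \<open>ennreal (pi * R\<^sup>2) \<le> 2 * _\<close> have "ennreal (pi * R\<^sup>2) \<le> ennreal (2 * x)"
      by (simp add: ennreal_mult)
    with real have "pi * R\<^sup>2 / 2 \<le> x"
      by (simp add: ennreal_le_iff)
    with real show ?thesis
      by (simp add: ennreal_leI)
  qed simp
qed

lemma segment_meets_line:
  assumes "0 \<le> cross2 e (w1 - m)" "cross2 e (w2 - m) \<le> 0"
  obtains t where "0 \<le> t" "t \<le> 1" "cross2 e ((1 - t) *\<^sub>R w1 + t *\<^sub>R w2 - m) = 0"
proof -
  define c1 c2 where "c1 = cross2 e (w1 - m)" and "c2 = cross2 e (w2 - m)"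
  have c: "0 \<le> c1" "c2 \<le> 0"
    using assms by (simp_all add: c1_def c2_def)
  obtain t where t: "0 \<le> t" "t \<le> 1" "(1 - t) * c1 + t * c2 = 0"
  proof (cases "c1 = c2")
    case True
    with c show ?thesis
      by (intro that[of 0]) simp_all
  next
    case False
    with c have "0 < c1 - c2"
      by simp
    with c show ?thesis
      by (intro that[of "c1 / (c1 - c2)"]) (simp_all add: field_simps)
  qed
  have "(1 - t) *\<^sub>R w1 + t *\<^sub>R w2 - m = (1 - t) *\<^sub>R (w1 - m) + t *\<^sub>R (w2 - m)"
    by (simp add: algebra_simps)
  then have "cross2 e ((1 - t) *\<^sub>R w1 + t *\<^sub>R w2 - m) = (1 - t) * c1 + t * c2"
    by (simp only: cross2_scaleR_add_right c1_def c2_def)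
  with t show ?thesis
    by (intro that[of t]) simp_all
qed

lemma abs_tdisp_le: "\<bar>tdisp t\<bar> \<le> 1/2"
  using of_int_round_abs_le[of t] by (simp add: tdisp_def abs_minus_commute)

lemma int_pair_eq_if_dist_less_1:
  assumes "dist ((of_int a, of_int b) :: real \<times> real) (of_int a', of_int b') < 1"
  shows "a = a' \<and> b = b'"
proof -
  have "\<bar>of_int a - of_int a'\<bar> < (1::real)" "\<bar>of_int b - of_int b'\<bar> < (1::real)"
    using assms norm_fst_le[of "of_int a - of_int a' :: real" "of_int b - of_int b' :: real"]
      norm_snd_le[of "of_int b - of_int b' :: real" "of_int a - of_int a' :: real"]
    by (auto simp: dist_norm)
  then show ?thesis
    by linarith
qed

lemma emeasure_lborel_vimage_plus:
  fixes c :: "'a::euclidean_space"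
  assumes "A \<in> sets borel"
  shows "emeasure lborel ((+) c -` A) = emeasure lborel A"
proof -
  have "emeasure lborel ((+) c -` A) = emeasure (distr lborel borel ((+) c)) A"
    using assms by (subst emeasure_distr) auto
  then show ?thesis
    by (simp add: lborel_distr_plus)
qed

text \<open>The image of \<open>H\<close> on the torus, represented in \<open>[0,1)\<^sup>2\<close>; translates by \<open>{-1, 0, 1}\<^sup>2\<close>
  suffice for the sets near the unit square used below.\<close>

definition torus_wrap :: "(real \<times> real) set \<Rightarrow> (real \<times> real) set" where
  "torus_wrap H = {y \<in> {0..<1} \<times> {0..<1}.
     \<exists>a\<in>{-1..1::int}. \<exists>b\<in>{-1..1::int}. y + (of_int a, of_int b) \<in> H}"

lemma emeasure_torus_wrap:
  assumes H: "H \<in> sets borel"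
    and diam: "\<And>w w'. w \<in> H \<Longrightarrow> w' \<in> H \<Longrightarrow> dist w w' < 1"
    and near: "H \<subseteq> {-1..<2} \<times> {-1..<2}"
  shows "emeasure lborel (torus_wrap H) = emeasure lborel H"
proof -
  \<comment> \<open>Cut \<open>H\<close> along the integer grid; the wrap consists of the translated pieces,
    which are disjoint because \<open>H\<close> has diameter less than \<open>1\<close>.\<close>
  define S where "S = {-1..1::int} \<times> {-1..1::int}"
  define sh where "sh z = ((of_int (fst z), of_int (snd z)) :: real \<times> real)" for z
  define cell where "cell z = {w :: real \<times> real. \<lfloor>fst w\<rfloor> = fst z \<and> \<lfloor>snd w\<rfloor> = snd z}" for z
  define piece where "piece z = (\<lambda>y. sh z + y) -` (H \<inter> cell z)" for z
  have cell_borel: "cell z \<in> sets borel" for z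
    unfolding cell_def by measurable
  have mem_piece: "y \<in> piece z \<longleftrightarrow> y \<in> {0..<1} \<times> {0..<1} \<and> y + sh z \<in> H" for y z
    by (auto simp: piece_def cell_def sh_def add.commute floor_eq_iff mem_Times_iff)
  have wrap: "torus_wrap H = (\<Union>z\<in>S. piece z)"
    by (fastforce simp: torus_wrap_def S_def mem_piece sh_def)
  have cover: "H = (\<Union>z\<in>S. H \<inter> cell z)"
  proof safe
    fix w assume "w \<in> H"
    with near have "(\<lfloor>fst w\<rfloor>, \<lfloor>snd w\<rfloor>) \<in> S"
      by (auto simp: S_def mem_Times_iff le_floor_iff floor_le_iff)
    with \<open>w \<in> H\<close> show "w \<in> (\<Union>z\<in>S. H \<inter> cell z)"
      by (intro UN_I[of "(\<lfloor>fst w\<rfloor>, \<lfloor>snd w\<rfloor>)"]) (auto simp: cell_def)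
  qed
  have piece_eq: "emeasure lborel (piece z) = emeasure lborel (H \<inter> cell z)" for z
    using H cell_borel unfolding piece_def by (intro emeasure_lborel_vimage_plus) auto
  have piece_disj: "disjoint_family_on piece S"
    unfolding disjoint_family_on_def
  proof (intro ballI impI)
    fix z z' :: "int \<times> int"
    assume "z \<noteq> z'"
    show "piece z \<inter> piece z' = {}"
    proof safe
      fix y assume "y \<in> piece z" "y \<in> piece z'"
      then have "dist (sh z) (sh z') < 1"
        using diam[of "y + sh z" "y + sh z'"] by (simp add: mem_piece)
      with \<open>z \<noteq> z'\<close> show "y \<in> {}"
        using int_pair_eq_if_dist_less_1 by (auto simp: sh_def prod_eq_iff)
    qed
  qed
  have cell_disj: "disjoint_family_on (\<lambda>z. H \<inter> cell z) S"
    by (auto simp: disjoint_family_on_def cell_def prod_eq_iff)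
  have piece_borel: "piece z \<in> sets borel" for z
    using H cell_borel by (simp add: piece_def)
  have "emeasure lborel (torus_wrap H) = (\<Sum>z\<in>S. emeasure lborel (piece z))"
    unfolding wrap using piece_borel piece_disj by (intro sum_emeasure[symmetric]) (auto simp: S_def)
  also have "\<dots> = (\<Sum>z\<in>S. emeasure lborel (H \<inter> cell z))"
    by (simp add: piece_eq)
  also have "\<dots> = emeasure lborel (\<Union>z\<in>S. H \<inter> cell z)"
    using H cell_borel cell_disj by (intro sum_emeasure) (auto simp: S_def)
  finally show ?thesis
    using cover by simp
qed

definition tmid :: "real \<times> real \<Rightarrow> real \<times> real \<Rightarrow> real \<times> real" where
  "tmid u v = u + (1/2) *\<^sub>R tvec u v"

text \<open>For \<open>\<sigma> = 1\<close> and \<open>\<sigma> = -1\<close> these are the two halves, on either side of the line \<open>uv\<close>,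
  of the open disc of diameter \<open>d\<close> around the midpoint of \<open>uv\<close>, wrapped onto the torus.\<close>

definition edge_half_disc :: "real \<Rightarrow> real \<Rightarrow> real \<times> real \<Rightarrow> real \<times> real \<Rightarrow> (real \<times> real) set" where
  "edge_half_disc d \<sigma> u v = torus_wrap (half_disc (tmid u v) (\<sigma> *\<^sub>R tvec u v) (d / 2))"

lemma edge_half_disc_subset: "edge_half_disc d \<sigma> u v \<subseteq> {0..1} \<times> {0..1}"
  by (auto simp: edge_half_disc_def torus_wrap_def)

lemma pred_edge_half_disc [measurable]:
  "Measurable.pred borel (\<lambda>(u, v, w). w \<in> edge_half_disc d \<sigma> u v)"
proof -
  have "Measurable.pred borel (\<lambda>z. snd (snd z) \<in> edge_half_disc d \<sigma> (fst z) (fst (snd z)))"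
    unfolding edge_half_disc_def torus_wrap_def half_disc_def tmid_def tvec_def cross2_def
      mem_Collect_eq mem_Times_iff
    by measurable
  then show ?thesis
    by (simp add: split_beta')
qed

lemma edge_half_disc_borel [measurable]: "edge_half_disc d \<sigma> u v \<in> sets borel"
proof -
  have "Measurable.pred borel (\<lambda>w. w \<in> edge_half_disc d \<sigma> u v)"
    unfolding edge_half_disc_def torus_wrap_def half_disc_def tmid_def tvec_def cross2_def
      mem_Collect_eq mem_Times_iff
    by measurable
  then show ?thesis
    by (simp add: Measurable.pred_def)
qed

lemma emeasure_edge_half_disc_ge:
  assumes u: "u \<in> {0..1} \<times> {0..1}" and d: "0 \<le> d" "d \<le> 1/2"
  shows "ennreal (pi * d\<^sup>2 / 8) \<le> emeasure lborel (edge_half_disc d \<sigma> u v)"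
proof -
  define m where "m = tmid u v"
  define H where "H = half_disc m (\<sigma> *\<^sub>R tvec u v) (d / 2)"
  have H_ball: "dist w m < 1/4" if "w \<in> H" for w
    using that d by (simp add: H_def half_disc_def)
  have "H \<subseteq> {-1..<2} \<times> {-1..<2}"
  proof
    fix w
    assume "w \<in> H"
    then have "dist (fst w) (fst m) < 1/4" "dist (snd w) (snd m) < 1/4"
      using H_ball le_less_trans[OF dist_fst_le] le_less_trans[OF dist_snd_le] by blast+
    then have "\<bar>fst w - fst m\<bar> < 1/4" "\<bar>snd w - snd m\<bar> < 1/4"
      by (simp_all add: dist_real_def)
    moreover have "\<bar>fst m - fst u\<bar> \<le> 1/4" "\<bar>snd m - snd u\<bar> \<le> 1/4"
      using abs_tdisp_le[of "fst v - fst u"] abs_tdisp_le[of "snd v - snd u"]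
      by (simp_all add: m_def tmid_def tvec_def)
    ultimately show "w \<in> {-1..<2} \<times> {-1..<2}"
      using u unfolding mem_Times_iff atLeastLessThan_iff atLeastAtMost_iff abs_less_iff abs_le_iff
      by (intro conjI) linarith+
  qed
  moreover have "dist w w' < 1" if "w \<in> H" "w' \<in> H" for w w'
    using H_ball[OF that(1)] H_ball[OF that(2)] dist_triangle2[of w w' m] by linarith
  ultimately have "emeasure lborel (edge_half_disc d \<sigma> u v) = emeasure lborel H"
    by (simp add: edge_half_disc_def H_def m_def emeasure_torus_wrap)
  moreover have "ennreal (pi * (d / 2)\<^sup>2 / 2) \<le> emeasure lborel H"
    using d unfolding H_def by (intro emeasure_half_disc_ge) simp
  ultimately show ?thesis
    by (simp add: power_divide)
qed

section \<open>A long edge with both half discs occupied is crossed\<close>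

lemma edge_lift_memI: "s \<in> S \<Longrightarrow> p + s *\<^sub>R tvec p q + (of_int a, of_int b) \<in> edge_lift p q S"
  unfolding edge_lift_def by blast

lemma edge_lift_shift:
  assumes "y \<in> edge_lift p q S"
  shows "y + (of_int a, of_int b) \<in> edge_lift p q S"
proof -
  from assms obtain s a' b' where "s \<in> S" and y: "y = p + s *\<^sub>R tvec p q + (of_int a', of_int b')"
    unfolding edge_lift_def by blast
  then have "y + (of_int a, of_int b) = p + s *\<^sub>R tvec p q + (of_int (a' + a), of_int (b' + b))"
    by simp
  with \<open>s \<in> S\<close> show ?thesis
    by (metis edge_lift_memI)
qed

lemma tdist_le_dist_shift: "tdist p q \<le> dist (p + (of_int a, of_int b)) q"
proof -
  have "\<bar>tdisp t\<bar> \<le> \<bar>t - of_int c\<bar>" for t c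
    using round_diff_minimal[of t c] by (simp add: tdisp_def)
  then have "(tdisp (fst q - fst p))\<^sup>2 + (tdisp (snd q - snd p))\<^sup>2 \<le>
      (fst q - fst p - of_int a)\<^sup>2 + (snd q - snd p - of_int b)\<^sup>2"
    by (intro add_mono) (simp_all add: abs_le_square_iff)
  moreover have "q - (p + (of_int a, of_int b)) = (fst q - fst p - of_int a, snd q - snd p - of_int b)"
    by (simp add: prod_eq_iff)
  ultimately show ?thesis
    by (simp add: tdist_def tvec_def dist_norm norm_minus_commute norm_Pair real_sqrt_le_mono)
qed

lemma tvec_eq_if_dist_shift_less:
  assumes "dist (p + (of_int a, of_int b)) (q + (of_int a', of_int b')) < 1/2"
  shows "tvec p q = (q + (of_int a', of_int b')) - (p + (of_int a, of_int b))"
proof -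
  define c where "c = (q + (of_int a', of_int b')) - (p + (of_int a, of_int b))"
  have tdisp_small: "tdisp (t + of_int k) = t" if "\<bar>t\<bar> < 1/2" for t k
  proof -
    from that have "round (t + of_int k) = k"
      by (intro round_unique') simp
    then show ?thesis
      by (simp add: tdisp_def)
  qed
  have c_small: "\<bar>fst c\<bar> < 1/2" "\<bar>snd c\<bar> < 1/2"
    using le_less_trans[OF dist_fst_le assms] le_less_trans[OF dist_snd_le assms]
    by (simp_all add: c_def dist_real_def abs_minus_commute)
  have "fst q - fst p = fst c + of_int (a - a')" "snd q - snd p = snd c + of_int (b - b')"
    by (simp_all add: c_def)
  then have "tdisp (fst q - fst p) = fst c" "tdisp (snd q - snd p) = snd c"
    using tdisp_small[OF c_small(1)] tdisp_small[OF c_small(2)] by (simp_all only:)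
  then have "tvec p q = c"
    by (simp add: tvec_def)
  then show ?thesis
    by (simp only: c_def)
qed

lemma mem_edge_lift_interiorI:
  assumes "cross2 (tvec u v) (w - tmid u v) = 0" "2 * dist w (tmid u v) < tdist u v"
  shows "w \<in> edge_lift u v {0<..<1}"
proof -
  let ?e = "tvec u v"
  have "?e \<noteq> 0"
    using assms(2) zero_le_dist[of w "tmid u v"] by (auto simp: tdist_def)
  with assms(1) obtain c where c: "w - tmid u v = c *\<^sub>R ?e"
    by (rule cross2_eq_0_imp_parallel)
  have "2 * \<bar>c\<bar> * norm ?e < 1 * norm ?e"
    using assms(2) c by (simp add: dist_norm tdist_def)
  then have "\<bar>c\<bar> < 1/2"
    using \<open>?e \<noteq> 0\<close> by (simp add: mult_less_cancel_right)
  then have "1/2 + c \<in> {0<..<1}"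
    by auto
  moreover have "w = u + (1/2 + c) *\<^sub>R ?e + (of_int 0, of_int 0)"
    using c by (simp add: tmid_def algebra_simps zero_prod_def)
  ultimately show ?thesis
    by (metis edge_lift_memI)
qed

lemma edge_half_discs_chord:
  assumes long: "d \<le> tdist u v" and hit: "y \<in> edge_half_disc d 1 u v" "y' \<in> edge_half_disc d (-1) u v"
  obtains a b a' b' t where "0 \<le> t" "t \<le> 1"
    "dist (y + (of_int a, of_int b)) (tmid u v) < d / 2"
    "dist (y + (of_int a, of_int b)) (y' + (of_int a', of_int b')) < d"
    "(1 - t) *\<^sub>R (y + (of_int a, of_int b)) + t *\<^sub>R (y' + (of_int a', of_int b')) \<in> edge_lift u v {0<..<1}"
proof -
  define e m where "e = tvec u v" and "m = tmid u v"
  obtain a b where w1: "dist (y + (of_int a, of_int b)) m < d / 2"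
      "0 \<le> cross2 e (y + (of_int a, of_int b) - m)"
    using hit(1) by (auto simp: edge_half_disc_def torus_wrap_def half_disc_def e_def m_def)
  obtain a' b' where w2: "dist (y' + (of_int a', of_int b')) m < d / 2"
      "cross2 e (y' + (of_int a', of_int b') - m) \<le> 0"
    using hit(2) by (auto simp: edge_half_disc_def torus_wrap_def half_disc_def e_def m_def)
  define w1 w2 where "w1 = y + (of_int a, of_int b)" and "w2 = y' + (of_int a', of_int b')"
  obtain t where t: "0 \<le> t" "t \<le> 1" and on_line: "cross2 e ((1 - t) *\<^sub>R w1 + t *\<^sub>R w2 - m) = 0"
    using segment_meets_line w1(2) w2(2) unfolding w1_def w2_def by blast
  have "(1 - t) *\<^sub>R w1 + t *\<^sub>R w2 \<in> ball m (d / 2)"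
    using convexD_alt[OF convex_ball, of w1 m "d / 2" w2 t] w1(1) w2(1) t
    by (simp add: w1_def w2_def dist_commute)
  then have "(1 - t) *\<^sub>R w1 + t *\<^sub>R w2 \<in> edge_lift u v {0<..<1}"
    using on_line long by (intro mem_edge_lift_interiorI) (auto simp: e_def m_def dist_commute)
  moreover have "dist w1 w2 < d"
    using w1(1) w2(1) dist_triangle2[of w1 w2 m] unfolding w1_def w2_def by linarith
  ultimately show ?thesis
    using that t w1(1) unfolding w1_def w2_def m_def by blast
qed

lemma not_free_edge_if_half_discs_hit:
  assumes ij: "i < n" "j < n" and kl: "k < n" "l < n" "k \<notin> {i, j}" "l \<notin> {i, j}"
    and long: "d \<le> tdist (x i) (x j)" and edge: "tdist (x i) (x j) \<le> r" and small: "d \<le> 1/2"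
    and hit_k: "x k \<in> edge_half_disc d 1 (x i) (x j)"
    and hit_l: "x l \<in> edge_half_disc d (-1) (x i) (x j)"
  shows "\<not> free_edge n x r i j"
proof -
  obtain a b a' b' t where t: "0 \<le> t" "t \<le> 1"
    and w1: "dist (x k + (of_int a, of_int b)) (tmid (x i) (x j)) < d / 2"
    and w12: "dist (x k + (of_int a, of_int b)) (x l + (of_int a', of_int b')) < d"
    and p_inner: "(1 - t) *\<^sub>R (x k + (of_int a, of_int b)) + t *\<^sub>R (x l + (of_int a', of_int b'))
      \<in> edge_lift (x i) (x j) {0<..<1}"
    by (rule edge_half_discs_chord[OF long hit_k hit_l])
  define w1 w2 p where "w1 = x k + (of_int a, of_int b)" and "w2 = x l + (of_int a', of_int b')"
    and "p = (1 - t) *\<^sub>R w1 + t *\<^sub>R w2"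
  show ?thesis
  proof (cases "k = l")
    case True
    \<comment> \<open>Then \<open>x k\<close> lies in both halves, hence on the segment \<open>uv\<close>, and the edge to \<open>u\<close> crosses \<open>uv\<close>.\<close>
    with w12 small have "w1 = w2"
      using int_pair_eq_if_dist_less_1[of a b a' b'] by (simp add: w1_def w2_def)
    then have "p = w1"
      by (simp add: p_def algebra_simps)
    then have "x k = p + (of_int (- a), of_int (- b))"
      by (simp add: w1_def prod_eq_iff)
    then have "x k \<in> edge_lift (x i) (x j) {0<..<1}"
      using edge_lift_shift[OF p_inner[folded w1_def w2_def, folded p_def], of "- a" "- b"] by (simp only:)
    moreover have "x k \<in> edge_lift (x k) (x i) {0..1}"
      using edge_lift_memI[of 0 "{0..1}" "x k" "x i" 0 0] by (simp flip: zero_prod_def)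
    moreover have "tdist (x k) (x i) \<le> dist w1 (tmid (x i) (x j)) + dist (tmid (x i) (x j)) (x i)"
      using tdist_le_dist_shift[of "x k" "x i" a b] dist_triangle[of w1 "x i" "tmid (x i) (x j)"]
      unfolding w1_def by linarith
    moreover have "dist (tmid (x i) (x j)) (x i) = tdist (x i) (x j) / 2"
      by (simp add: tmid_def tdist_def dist_norm)
    ultimately show ?thesis
      using ij kl w1 long edge unfolding free_edge_def rgg_edge_def w1_def by fastforce
  next
    case False
    have tv: "tvec (x k) (x l) = w2 - w1"
      using w12 small unfolding w1_def w2_def by (intro tvec_eq_if_dist_shift_less) simp
    have "p = w1 + t *\<^sub>R (w2 - w1)"
      by (simp add: p_def algebra_simps)
    also have "\<dots> = x k + t *\<^sub>R tvec (x k) (x l) + (of_int a, of_int b)"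
      by (simp add: tv w1_def add_ac)
    finally have "p \<in> edge_lift (x k) (x l) {0..1}"
      using edge_lift_memI[of t "{0..1}"] t by simp
    moreover have "tdist (x k) (x l) \<le> r"
      using w12 long edge by (simp add: tdist_def tv w1_def w2_def dist_norm norm_minus_commute)
    ultimately show ?thesis
      using p_inner False kl unfolding free_edge_def rgg_edge_def w1_def w2_def p_def by blast
  qed
qed

section \<open>Probability estimates\<close>

lemma pred_in_square_long:
  "Measurable.pred (torus_unif \<Otimes>\<^sub>M torus_unif) (\<lambda>(u, v). u \<in> {0..1} \<times> {0..1} \<and> d \<le> tdist u v)"
proof -
  have "Measurable.pred borel (\<lambda>z. fst z \<in> {0..1} \<times> {0..1} \<and> d \<le> tdist (fst z) (snd z))"
    unfolding mem_Times_iff by measurable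
  then show ?thesis
    unfolding measurable_cong_sets[OF sets_pair_torus_unif refl] by (simp add: split_beta')
qed

lemma pred_torus_edge_half_disc:
  "Measurable.pred (torus_unif \<Otimes>\<^sub>M torus_unif \<Otimes>\<^sub>M torus_unif) (\<lambda>(u, v, w). w \<in> edge_half_disc d \<sigma> u v)"
proof -
  have triple: "sets (torus_unif \<Otimes>\<^sub>M torus_unif \<Otimes>\<^sub>M torus_unif) = sets borel"
    by (simp only: sets_pair_measure_cong[OF sets_torus_unif sets_pair_torus_unif] borel_prod)
  show ?thesis
    unfolding measurable_cong_sets[OF triple refl] by measurable
qed

lemma pi_mult_sq_div_8_le_1: "0 \<le> d \<Longrightarrow> d \<le> 1 \<Longrightarrow> pi * d\<^sup>2 / 8 \<le> 1"
  using mult_mono[OF less_imp_le[OF pi_less_4] power_le_one[of d 2]] by simp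

definition empty_half_disc_event :: "nat \<Rightarrow> real \<Rightarrow> nat \<Rightarrow> nat \<Rightarrow> real \<Rightarrow> (nat \<Rightarrow> real \<times> real) set" where
  "empty_half_disc_event n d i j \<sigma> =
     {x \<in> space (rgg_space n). (x i \<in> {0..1} \<times> {0..1} \<and> d \<le> tdist (x i) (x j)) \<and>
        (\<forall>k\<in>{..<n} - {i, j}. x k \<notin> edge_half_disc d \<sigma> (x i) (x j))}"

lemma empty_half_disc_event_sets:
  "i < n \<Longrightarrow> j < n \<Longrightarrow> empty_half_disc_event n d i j \<sigma> \<in> sets (rgg_space n)"
  unfolding empty_half_disc_event_def rgg_space_def
  by (rule sets_PiM_avoid[OF _ _ pred_in_square_long pred_torus_edge_half_disc])

lemma measure_empty_half_disc_event_le: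
  assumes ij: "i < n" "j < n" "i \<noteq> j" and d: "0 \<le> d" "d \<le> 1/2"
  shows "measure (rgg_space n) (empty_half_disc_event n d i j \<sigma>) \<le> (1 - pi * d\<^sup>2 / 8) ^ (n - 2)"
proof -
  interpret T: prob_space torus_unif
    by (rule prob_space_torus_unif)
  have "pi * d\<^sup>2 / 8 \<le> T.prob (edge_half_disc d \<sigma> u v)" if "u \<in> {0..1} \<times> {0..1}" for u v
  proof -
    have "emeasure torus_unif (edge_half_disc d \<sigma> u v) = emeasure lborel (edge_half_disc d \<sigma> u v)"
      using edge_half_disc_subset[of d \<sigma> u v] by (simp add: emeasure_torus_unif Int_absorb1)
    then have "ennreal (pi * d\<^sup>2 / 8) \<le> ennreal (T.prob (edge_half_disc d \<sigma> u v))"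
      using emeasure_edge_half_disc_ge[OF that d] by (simp add: T.emeasure_eq_measure)
    then show ?thesis
      by (simp add: ennreal_le_iff)
  qed
  moreover have "pi * d\<^sup>2 / 8 \<le> 1"
    using d by (intro pi_mult_sq_div_8_le_1) auto
  ultimately show ?thesis
    unfolding empty_half_disc_event_def rgg_space_def
    by (intro T.measure_PiM_avoid_le[OF ij pred_in_square_long pred_torus_edge_half_disc]) auto
qed

definition half_discs_hit_event :: "nat \<Rightarrow> real \<Rightarrow> (nat \<Rightarrow> real \<times> real) set" where
  "half_discs_hit_event n d =
     (\<Pi>\<^sub>E k\<in>{..<n}. {0..1} \<times> {0..1}) -
     (\<Union>(i, j, \<sigma>)\<in>{(i, j, \<sigma>). i < n \<and> j < n \<and> i \<noteq> j \<and> \<sigma> \<in> {-1, 1}}. empty_half_disc_event n d i j \<sigma>)"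

lemma UN_empty_half_disc_event_sets:
  "(\<Union>(i, j, \<sigma>)\<in>{(i, j, \<sigma>). i < n \<and> j < n \<and> i \<noteq> j \<and> \<sigma> \<in> {-1, 1}}. empty_half_disc_event n d i j \<sigma>)
    \<in> sets (rgg_space n)"
proof -
  have "finite {(i, j, \<sigma>). i < n \<and> j < n \<and> i \<noteq> j \<and> \<sigma> \<in> {-1, 1::real}}"
    by (rule finite_subset[of _ "{..<n} \<times> {..<n} \<times> {-1, 1}"]) auto
  then show ?thesis
    by (intro sets.finite_UN) (auto simp: empty_half_disc_event_sets)
qed

lemma half_discs_hit_event_sets: "half_discs_hit_event n d \<in> sets (rgg_space n)"
proof -
  have "(\<Pi>\<^sub>E k\<in>{..<n}. {0..1} \<times> {0..1}) \<in> sets (rgg_space n)"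
    unfolding rgg_space_def using unit_square_borel by (intro sets_PiM_I_finite) auto
  then show ?thesis
    unfolding half_discs_hit_event_def using UN_empty_half_disc_event_sets by (rule sets.Diff)
qed

lemma half_discs_hit_event_subset:
  assumes "d \<le> 1/2"
  shows "half_discs_hit_event n d \<subseteq> {x \<in> space (rgg_space n). \<forall>i<n. \<forall>j<n.
    rgg_edge x r i j \<and> d \<le> tdist (x i) (x j) \<longrightarrow> \<not> free_edge n x r i j}"
proof safe
  fix x
  assume x: "x \<in> half_discs_hit_event n d"
  then show "x \<in> space (rgg_space n)"
    by (auto simp: half_discs_hit_event_def rgg_space_def space_PiM)
  fix i j
  assume ij: "i < n" "j < n" and edge: "rgg_edge x r i j" and long: "d \<le> tdist (x i) (x j)"
    and free: "free_edge n x r i j"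
  have "i \<noteq> j" "tdist (x i) (x j) \<le> r" "x i \<in> {0..1} \<times> {0..1}"
    using edge x ij by (auto simp: rgg_edge_def half_discs_hit_event_def)
  with x ij long have hit: "\<exists>k\<in>{..<n} - {i, j}. x k \<in> edge_half_disc d \<sigma> (x i) (x j)"
    if "\<sigma> \<in> {-1, 1}" for \<sigma>
    using that \<open>x \<in> space (rgg_space n)\<close>
    by (fastforce simp: half_discs_hit_event_def empty_half_disc_event_def)
  obtain k l where "k \<in> {..<n} - {i, j}" "x k \<in> edge_half_disc d 1 (x i) (x j)"
    and "l \<in> {..<n} - {i, j}" "x l \<in> edge_half_disc d (-1) (x i) (x j)"
    using hit[of 1] hit[of "-1"] by auto
  with ij long \<open>tdist (x i) (x j) \<le> r\<close> assms free show False
    using not_free_edge_if_half_discs_hit[of i n j k l d x r] by auto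
qed

lemma measure_half_discs_hit_event_ge:
  assumes d: "0 \<le> d" "d \<le> 1/2"
  shows "1 - 2 * real n ^ 2 * (1 - pi * d\<^sup>2 / 8) ^ (n - 2) \<le> measure (rgg_space n) (half_discs_hit_event n d)"
proof -
  interpret P: prob_space "rgg_space n"
    by (rule prob_space_rgg_space)
  interpret T: prob_space torus_unif
    by (rule prob_space_torus_unif)
  interpret product_sigma_finite "\<lambda>_. torus_unif"
    by (simp add: product_sigma_finite_def T.sigma_finite_measure_axioms)
  define I where "I = {(i, j, \<sigma>). i < n \<and> j < n \<and> i \<noteq> j \<and> \<sigma> \<in> {-1, 1::real}}"
  define Q where "Q = (\<Pi>\<^sub>E k\<in>{..<n}. {0..1} \<times> {0..1} :: (real \<times> real) set)"
  define U where "U = (\<Union>(i, j, \<sigma>)\<in>I. empty_half_disc_event n d i j \<sigma>)"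
  define q where "q = (1 - pi * d\<^sup>2 / 8) ^ (n - 2)"
  have I: "I \<subseteq> {..<n} \<times> {..<n} \<times> {-1, 1}"
    by (auto simp: I_def)
  then have "finite I"
    by (rule finite_subset) auto
  have "card I \<le> card ({..<n} \<times> {..<n} \<times> {-1, 1::real})"
    using I by (intro card_mono) auto
  also have "card ({..<n} \<times> {..<n} \<times> {-1, 1::real}) = 2 * n ^ 2"
    by (simp add: card_cartesian_product power2_eq_square)
  finally have card_I: "real (card I) \<le> 2 * real n ^ 2"
    by (simp add: of_nat_le_iff[of _ "2 * n ^ 2", where 'a=real, symmetric])
  have "0 \<le> q"
    using pi_mult_sq_div_8_le_1[of d] d by (simp add: q_def)
  have "emeasure (rgg_space n) Q = (\<Prod>k<n. emeasure torus_unif ({0..1} \<times> {0..1}))"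
    unfolding rgg_space_def Q_def using unit_square_borel by (intro emeasure_PiM) auto
  also have "\<dots> = 1"
    using unit_square_borel by (simp add: emeasure_torus_unif emeasure_unit_square)
  finally have "P.prob Q = 1"
    by (simp add: P.emeasure_eq_measure)
  have "P.prob U \<le> (\<Sum>z\<in>I. P.prob ((\<lambda>(i, j, \<sigma>). empty_half_disc_event n d i j \<sigma>) z))"
    unfolding U_def using \<open>finite I\<close>
    by (intro measure_UNION_le) (auto simp: I_def empty_half_disc_event_sets)
  also have "\<dots> \<le> (\<Sum>z\<in>I. q)"
    using d by (intro sum_mono) (auto simp: I_def q_def intro!: measure_empty_half_disc_event_le)
  also have "\<dots> \<le> 2 * real n ^ 2 * q"
    using card_I \<open>0 \<le> q\<close> by (simp add: mult_right_mono)
  finally have U_prob: "P.prob U \<le> 2 * real n ^ 2 * q" .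
  have U_sets: "U \<in> P.events"
    unfolding U_def I_def by (rule UN_empty_half_disc_event_sets)
  have QU_sets: "Q - U \<in> P.events"
    using half_discs_hit_event_sets by (simp add: half_discs_hit_event_def Q_def U_def I_def)
  have "P.prob Q \<le> P.prob ((Q - U) \<union> U)"
    using sets.Un[OF QU_sets U_sets] by (intro P.finite_measure_mono) auto
  also have "\<dots> \<le> P.prob (Q - U) + P.prob U"
    using QU_sets U_sets by (rule measure_Un_le)
  finally show ?thesis
    using U_prob \<open>P.prob Q = 1\<close> by (simp add: half_discs_hit_event_def Q_def U_def I_def q_def)
qed

lemma whp_eventuallyI:
  assumes "\<And>n. A n \<in> sets (rgg_space n)"
    and "eventually (\<lambda>n. A n \<subseteq> {x \<in> space (rgg_space n). P n x}) sequentially"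
    and "(\<lambda>n. measure (rgg_space n) (A n)) \<longlonglongrightarrow> 1"
  shows "whp P"
proof -
  define A' where "A' n = (if A n \<subseteq> {x \<in> space (rgg_space n). P n x} then A n else {})" for n
  from assms(2) have "eventually (\<lambda>n. measure (rgg_space n) (A n) = measure (rgg_space n) (A' n)) sequentially"
    by eventually_elim (simp add: A'_def)
  with assms(3) have "(\<lambda>n. measure (rgg_space n) (A' n)) \<longlonglongrightarrow> 1"
    by (rule Lim_transform_eventually)
  moreover have "A' n \<in> sets (rgg_space n) \<and> A' n \<subseteq> {x \<in> space (rgg_space n). P n x}" for n
    using assms(1) by (simp add: A'_def)
  ultimately show ?thesis
    unfolding whp_def by blast
qed

lemma tendsto_half_disc_union_bound:
  "(\<lambda>n. 2 * real n ^ 2 * (1 - pi * ln (real n) / real n) ^ (n - 2)) \<longlonglongrightarrow> 0"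
proof (rule tendsto_sandwich)
  define a where "a n = pi * ln (real n) / real n" for n :: nat
  have "eventually (\<lambda>n::nat. 4 * ln (real n) / real n \<le> 1) sequentially"
    by real_asymp
  with eventually_ge_at_top[of "2::nat"]
  have large: "eventually (\<lambda>n. 2 \<le> n \<and> 3 * ln (real n) / real n \<le> a n \<and> 0 \<le> 1 - a n) sequentially"
  proof eventually_elim
    case (elim n)
    then have "0 \<le> ln (real n)"
      by simp
    then have "3 * ln (real n) / real n \<le> pi * ln (real n) / real n"
      and "pi * ln (real n) / real n \<le> 4 * ln (real n) / real n"
      using pi_gt3 pi_less_4 by (intro divide_right_mono mult_right_mono; simp)+
    with elim show ?case
      unfolding a_def by (intro conjI) linarith+
  qed
  then show "eventually (\<lambda>n. 0 \<le> 2 * real n ^ 2 * (1 - pi * ln (real n) / real n) ^ (n - 2)) sequentially"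
    by eventually_elim (simp add: a_def)
  from large show "eventually (\<lambda>n. 2 * real n ^ 2 * (1 - pi * ln (real n) / real n) ^ (n - 2)
      \<le> 2 * real n ^ 2 * exp (- (3 * ln (real n) / real n) * (real n - 2))) sequentially"
  proof eventually_elim
    case (elim n)
    have "(1 - a n) ^ (n - 2) \<le> exp (- a n) ^ (n - 2)"
      using elim exp_ge_add_one_self[of "- a n"] by (intro power_mono) auto
    also have "\<dots> = exp (- a n * (real n - 2))"
      using elim by (simp add: exp_of_nat_mult[symmetric] of_nat_diff mult.commute)
    also have "\<dots> \<le> exp (- (3 * ln (real n) / real n) * (real n - 2))"
      using elim by (intro exp_mono mult_right_mono) auto
    finally show ?case
      unfolding a_def by (intro mult_left_mono) auto
  qed
  show "(\<lambda>n. 2 * real n ^ 2 * exp (- (3 * ln (real n) / real n) * (real n - 2))) \<longlonglongrightarrow> 0"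
    by real_asymp
qed simp

lemma tendsto_measure_half_discs_hit_event:
  "(\<lambda>n. measure (rgg_space n) (half_discs_hit_event n (sqrt (8 * ln (real n) / real n)))) \<longlonglongrightarrow> 1"
proof -
  let ?d = "\<lambda>n::nat. sqrt (8 * ln (real n) / real n)"
  have "eventually (\<lambda>n. ?d n \<le> 1/2) sequentially"
    by real_asymp
  with eventually_gt_at_top[of "0::nat"]
  have lower: "eventually (\<lambda>n. 1 - 2 * real n ^ 2 * (1 - pi * ln (real n) / real n) ^ (n - 2)
      \<le> measure (rgg_space n) (half_discs_hit_event n (?d n))) sequentially"
  proof eventually_elim
    case (elim n)
    then have "(?d n)\<^sup>2 = 8 * ln (real n) / real n"
      by (intro real_sqrt_pow2) simp
    with elim show ?case
      using measure_half_discs_hit_event_ge[of "?d n" n] by simp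
  qed
  have upper: "eventually (\<lambda>n. measure (rgg_space n) (half_discs_hit_event n (?d n)) \<le> 1) sequentially"
    by (intro always_eventually allI prob_space.prob_le_1 prob_space_rgg_space)
  have "(\<lambda>n. 1 - 2 * real n ^ 2 * (1 - pi * ln (real n) / real n) ^ (n - 2)) \<longlonglongrightarrow> 1"
    using tendsto_diff[OF tendsto_const tendsto_half_disc_union_bound, of 1] by simp
  from tendsto_sandwich[OF lower upper this tendsto_const] show ?thesis .
qed

theorem lemma3:
  fixes r :: "nat \<Rightarrow> real"
  shows "whp (\<lambda>n x. \<forall>i<n. \<forall>j<n.
            rgg_edge x (r n) i j \<and> tdist (x i) (x j) \<ge> sqrt (8 * ln (real n) / real n)
            \<longrightarrow> \<not> free_edge n x (r n) i j)"
proof (rule whp_eventuallyI)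
  let ?d = "\<lambda>n::nat. sqrt (8 * ln (real n) / real n)"
  show "half_discs_hit_event n (?d n) \<in> sets (rgg_space n)" for n
    by (rule half_discs_hit_event_sets)
  have "eventually (\<lambda>n. ?d n \<le> 1/2) sequentially"
    by real_asymp
  then show "eventually (\<lambda>n. half_discs_hit_event n (?d n) \<subseteq> {x \<in> space (rgg_space n).
      \<forall>i<n. \<forall>j<n. rgg_edge x (r n) i j \<and> ?d n \<le> tdist (x i) (x j) \<longrightarrow> \<not> free_edge n x (r n) i j})
    sequentially"
    by eventually_elim (rule half_discs_hit_event_subset)
  show "(\<lambda>n. measure (rgg_space n) (half_discs_hit_event n (?d n))) \<longlonglongrightarrow> 1"
    by (rule tendsto_measure_half_discs_hit_event)
qed

end
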